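(* Let $\mathbb F$ be algebraically closed of characteristic $0$, let $V$ be a vector space over $\mathbb F$ of finite positive dimension, and let $A,A^*$ be a TD pair on $V$ of Krawtchouk type. Let $\dagger$ be the antiautomorphism of $\mathrm{End}(V)$ defined by $\langle Xu,v\rangle=\langle u,X^\dagger v\rangle$ for all $X\in\mathrm{End}(V)$, $u,v\in V$, where $\langle\,,\rangle$ is a nonzero bilinear form on $V$ satisfying $\langle Au,v\rangle=\langle u,Av\rangle$ and $\langle A^*u,v\rangle=\langle u,A^*v\rangle$ for all $u,v$ (such a form exists, is nondegenerate, and is unique up to a nonzero scalar, so $\dagger$ is well defined). Then $\dagger$ is the unique antiautomorphism of $\mathrm{End}(V)$ that fixes each of $A,A^*$. Moreover $X^{\dagger\dagger}=X$ for all $X\in\mathrm{End}(V)$.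
   Context: An antiautomorphism of $\mathrm{End}(V)$ is an $\mathbb F$-linear bijection $\varrho:\mathrm{End}(V)\to\mathrm{End}(V)$ with $(XY)^\varrho=Y^\varrho X^\varrho$. A TD pair on a finite-dimensional $\mathbb F$-vector space $V$ is an ordered pair $A,A^*$ of diagonalizable linear maps on $V$ such that for some ordering $V_0,\dots,V_d$ of the eigenspaces of $A$ one has $A^*V_i\subseteq V_{i-1}+V_i+V_{i+1}$ ($0\le i\le d$), for some ordering $V^*_0,\dots,V^*_\delta$ of the eigenspaces of $A^*$ one has $AV^*_i\subseteq V^*_{i-1}+V^*_i+V^*_{i+1}$ ($0\le i\le\delta$) (terms with out-of-range index are $0$), and no subspace $W\neq 0,V$ satisfies $AW\subseteq W$, $A^*W\subseteq W$. Such orderings are called standard; an ordering of eigenvalues is standard if the corresponding ordering of eigenspaces is. It is known that $d=\delta$ (the diameter). The TD pair has Krawtchouk type if the sequence $(d-2i)_{i=0}^d$ is a standard ordering of the eigenvalues of $A$ and also a standard ordering of the eigenvalues of $A^*$. *)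

theory Defs
  imports "HOL-Analysis.Analysis" "HOL-Computational_Algebra.Polynomial"
begin

text \<open>V is modelled as the coordinate space 'f^'n ('n a nonempty finite type, so
  dim V = CARD('n) > 0); End(V) is modelled as the n x n matrices 'f^'n^'n
  acting by (*v), with composition (**).\<close>

definition alg_closed :: "'a::field itself \<Rightarrow> bool" where
  "alg_closed _ \<longleftrightarrow> (\<forall>p::'a poly. degree p \<ge> 1 \<longrightarrow> (\<exists>x. poly p x = 0))"

definition eigenspace :: "'f::field^'n^'n \<Rightarrow> 'f \<Rightarrow> ('f^'n) set" where
  "eigenspace A \<theta> = {v. A *v v = \<theta> *s v}"

definition is_eigenvalue :: "'f::field^'n^'n \<Rightarrow> 'f \<Rightarrow> bool" where
  "is_eigenvalue A \<theta> \<longleftrightarrow> eigenspace A \<theta> \<noteq> {0}"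

definition diagonalizable :: "'f::field^'n^'n \<Rightarrow> bool" where
  "diagonalizable A \<longleftrightarrow> vec.span (\<Union>\<theta>\<in>{\<theta>. is_eigenvalue A \<theta>}. eigenspace A \<theta>) = UNIV"

text \<open>Eigenspace number j of the ordering th_0..th_d; zero for out-of-range j.\<close>
definition ES :: "'f::field^'n^'n \<Rightarrow> (nat \<Rightarrow> 'f) \<Rightarrow> nat \<Rightarrow> int \<Rightarrow> ('f^'n) set" where
  "ES A th d j = (if 0 \<le> j \<and> j \<le> int d then eigenspace A (th (nat j)) else {0})"

definition standard_ordering ::
    "'f::field^'n^'n \<Rightarrow> 'f^'n^'n \<Rightarrow> (nat \<Rightarrow> 'f) \<Rightarrow> nat \<Rightarrow> bool" where
  "standard_ordering A B th d \<longleftrightarrow>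
     inj_on th {0..d} \<and>
     th ` {0..d} = {\<theta>. is_eigenvalue A \<theta>} \<and>
     (\<forall>i\<le>d. \<forall>v\<in>eigenspace A (th i).
        B *v v \<in> {x + y + z | x y z.
           x \<in> ES A th d (int i - 1) \<and> y \<in> ES A th d (int i) \<and> z \<in> ES A th d (int i + 1)})"

definition TD_pair :: "'f::field^'n^'n \<Rightarrow> 'f^'n^'n \<Rightarrow> bool" where
  "TD_pair A B \<longleftrightarrow>
     diagonalizable A \<and> diagonalizable B \<and>
     (\<exists>th d. standard_ordering A B th d) \<and>
     (\<exists>th d. standard_ordering B A th d) \<and>
     (\<forall>W. vec.subspace W \<and> W \<noteq> {0} \<and> W \<noteq> UNIV \<longrightarrow>
        \<not> ((\<forall>w\<in>W. A *v w \<in> W) \<and> (\<forall>w\<in>W. B *v w \<in> W)))"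

definition krawtchouk_type :: "'f::field^'n^'n \<Rightarrow> 'f^'n^'n \<Rightarrow> bool" where
  "krawtchouk_type A B \<longleftrightarrow>
     (\<exists>d. standard_ordering A B (\<lambda>i. of_nat d - 2 * of_nat i) d \<and>
          standard_ordering B A (\<lambda>i. of_nat d - 2 * of_nat i) d)"

definition mscale :: "'f::field \<Rightarrow> 'f^'n^'n \<Rightarrow> 'f^'n^'n" where
  "mscale c X = (\<chi> i j. c * X $ i $ j)"

definition antiautomorphism :: "('f::field^'n^'n \<Rightarrow> 'f^'n^'n) \<Rightarrow> bool" where
  "antiautomorphism f \<longleftrightarrow>
     (\<forall>X Y. f (X + Y) = f X + f Y) \<and> (\<forall>c X. f (mscale c X) = mscale c (f X)) \<and>
     bij f \<and> (\<forall>X Y. f (X ** Y) = f Y ** f X)"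

definition bilinear_form :: "('f::field^'n \<Rightarrow> 'f^'n \<Rightarrow> 'f) \<Rightarrow> bool" where
  "bilinear_form b \<longleftrightarrow>
     (\<forall>x y z. b (x + y) z = b x z + b y z) \<and> (\<forall>c x z. b (c *s x) z = c * b x z) \<and>
     (\<forall>x y z. b x (y + z) = b x y + b x z) \<and> (\<forall>c x z. b x (c *s z) = c * b x z)"

end

theory Submission
  imports Defs
begin

(* Only two features of a TD pair A, A* are used: the pair is irreducible
   (no common invariant subspace other than 0 and V) and the field is algebraically closed.
   By Burnside's theorem the unital algebra generated by A and A* is then all of End(V).
   Consequently
   - an invariant symmetric form <,> is nondegenerate (its radical is invariant),
     so the adjoint X^dagger is determined by the defining identity, and it is a unital
     anti-homomorphism fixing A and A*;
   - any two unital anti-homomorphisms agreeing on A and A* agree on End(V), which gives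
     uniqueness, and dagger o dagger is the identity, which gives bijectivity. *)

lemma mscale_mv: "mscale c X *v v = c *s (X *v v)"
  by (simp add: mscale_def matrix_vector_mult_def vec_eq_iff sum_distrib_left mult.assoc)

lemma mscale_zero: "mscale 0 X = 0"
  by (simp add: mscale_def vec_eq_iff)

lemma mat_mv: "(mat l :: 'f::field^'n^'n) *v v = l *s v"
  by (simp add: vec_eq_iff mat_def matrix_vector_mult_def if_distrib[of "\<lambda>x. x * _"] cong: if_cong)

lemma minus_mat_as_mscale: "(M::'f::field^'n^'n) - mat l = M + mscale (-l) (mat 1)"
  by (simp add: mscale_def mat_def vec_eq_iff)

lemma mat_one_nonzero: "(mat 1 :: 'f::field^'n^'n) \<noteq> 0"
proof -
  obtain i :: 'n where True by blast
  have "(mat 1 :: 'f^'n^'n) $ i $ i = 1" by (simp add: mat_def)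
  then show ?thesis by auto
qed

lemma nonzero_matrix_witness: "(T::'f::field^'n^'n) \<noteq> 0 \<Longrightarrow> \<exists>x. T *v x \<noteq> 0"
  using matrix_eq[of T 0] by auto

section \<open>The unital algebra generated by two matrices\<close>

inductive_set generated_algebra :: "'f::field^'n^'n \<Rightarrow> 'f^'n^'n \<Rightarrow> ('f^'n^'n) set"
  for A B where
  gen_left: "A \<in> generated_algebra A B"
| gen_right: "B \<in> generated_algebra A B"
| gen_one: "mat 1 \<in> generated_algebra A B"
| gen_add: "X \<in> generated_algebra A B \<Longrightarrow> Y \<in> generated_algebra A B \<Longrightarrow> X + Y \<in> generated_algebra A B"
| gen_mult: "X \<in> generated_algebra A B \<Longrightarrow> Y \<in> generated_algebra A B \<Longrightarrow> X ** Y \<in> generated_algebra A B"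
| gen_scale: "X \<in> generated_algebra A B \<Longrightarrow> mscale c X \<in> generated_algebra A B"

lemma gen_zero: "0 \<in> generated_algebra A B"
  using gen_scale[OF gen_one, where c=0] by (simp add: mscale_zero)

lemma gen_sum:
  "finite S \<Longrightarrow> (\<And>i. i \<in> S \<Longrightarrow> f i \<in> generated_algebra A B) \<Longrightarrow> sum f S \<in> generated_algebra A B"
  by (induction S rule: finite_induct) (auto intro: gen_zero gen_add)

lemma generated_algebra_least:
  assumes "A \<in> S" "B \<in> S" "mat 1 \<in> S"
    and "\<And>X Y. X \<in> S \<Longrightarrow> Y \<in> S \<Longrightarrow> X + Y \<in> S"
    and "\<And>X Y. X \<in> S \<Longrightarrow> Y \<in> S \<Longrightarrow> X ** Y \<in> S"
    and "\<And>c X. X \<in> S \<Longrightarrow> mscale c X \<in> S"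
  shows "generated_algebra A B \<subseteq> S"
proof
  fix X assume "X \<in> generated_algebra A B"
  then show "X \<in> S" by induction (use assms in auto)
qed

definition irreducible_pair :: "'f::field^'n^'n \<Rightarrow> 'f^'n^'n \<Rightarrow> bool" where
  "irreducible_pair A B \<longleftrightarrow> (\<forall>W. vec.subspace W \<and> W \<noteq> {0} \<and> W \<noteq> UNIV \<longrightarrow>
        \<not> ((\<forall>w\<in>W. A *v w \<in> W) \<and> (\<forall>w\<in>W. B *v w \<in> W)))"

lemma TD_pair_irreducible: "TD_pair A B \<Longrightarrow> irreducible_pair A B"
  unfolding TD_pair_def irreducible_pair_def by blast

lemma irreducible_pairD:
  assumes "irreducible_pair A B" "vec.subspace W" "\<forall>w\<in>W. A *v w \<in> W" "\<forall>w\<in>W. B *v w \<in> W"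
  shows "W = {0} \<or> W = UNIV"
  using assms unfolding irreducible_pair_def by blast

text \<open>For an irreducible pair the orbit of any nonzero vector under the generated algebra is
  the whole space, being a nonzero invariant subspace.\<close>
lemma cyclic_vector:
  fixes A B :: "'f::field^'n^'n"
  assumes "irreducible_pair A B" "x \<noteq> 0"
  shows "\<exists>X\<in>generated_algebra A B. X *v x = y"
proof -
  let ?W = "{X *v x | X. X \<in> generated_algebra A B}"
  have sub: "vec.subspace ?W"
    unfolding vec.subspace_def
  proof (intro conjI ballI allI)
    show "0 \<in> ?W" using gen_zero[of A B] by force
    fix u v assume "u \<in> ?W" "v \<in> ?W"
    then obtain X Y where "X \<in> generated_algebra A B" "Y \<in> generated_algebra A B"
      "u = X *v x" "v = Y *v x" by blast
    then show "u + v \<in> ?W"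
      by (metis (mono_tags, lifting) gen_add matrix_vector_mult_add_rdistrib mem_Collect_eq)
  next
    fix c u assume "u \<in> ?W"
    then obtain X where "X \<in> generated_algebra A B" "u = X *v x" by blast
    then show "c *s u \<in> ?W" using gen_scale[of X A B c] mscale_mv[of c X x] by force
  qed
  have "\<forall>w\<in>?W. A *v w \<in> ?W" "\<forall>w\<in>?W. B *v w \<in> ?W"
    using gen_mult[OF gen_left] gen_mult[OF gen_right] by (force simp: matrix_vector_mul_assoc)+
  moreover have "x \<in> ?W" using gen_one[of A B] by force
  ultimately have "?W = UNIV" using irreducible_pairD[OF assms(1) sub] assms(2) by blast
  then have "y \<in> ?W" by simp
  then show ?thesis by blast
qed

section \<open>Eigenvectors on invariant subspaces\<close>

lemma span_finite_family:
  fixes f :: "'i \<Rightarrow> 'f::field^'n"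
  assumes "finite I" "y \<in> vec.span (f ` I)"
  shows "\<exists>c. y = (\<Sum>i\<in>I. c i *s f i)"
  using assms(2)
proof (induction rule: vec.span_induct_alt)
  case base
  show ?case by (rule exI[of _ "\<lambda>_. 0"]) simp
next
  case (step a x y)
  then obtain i0 where i0: "i0 \<in> I" "x = f i0" by blast
  from step obtain c where c: "y = (\<Sum>i\<in>I. c i *s f i)" by blast
  have "(\<Sum>i\<in>I. (c i + (if i = i0 then a else 0)) *s f i)
        = (\<Sum>i\<in>I. c i *s f i) + (\<Sum>i\<in>I. (if i = i0 then a else 0) *s f i)"
    by (simp add: vec.scale_left_distrib sum.distrib)
  also have "(\<Sum>i\<in>I. (if i = i0 then a else 0) *s f i) = a *s f i0"
    using i0 assms(1) by (simp add: if_distrib[of "\<lambda>r. r *s _"] sum.delta' cong: if_cong)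
  finally show ?case using c i0 by (metis add.commute)
qed

definition poly_apply :: "'f::field poly \<Rightarrow> 'f^'n^'n \<Rightarrow> 'f^'n \<Rightarrow> 'f^'n" where
  "poly_apply p M v = (\<Sum>i<Suc (degree p). coeff p i *s (((*v) M ^^ i) v))"

lemma poly_apply_upto:
  assumes "degree p < N"
  shows "poly_apply p M v = (\<Sum>i<N. coeff p i *s (((*v) M ^^ i) v))"
  unfolding poly_apply_def
proof (rule sum.mono_neutral_left)
  show "\<forall>i\<in>{..<N} - {..<Suc (degree p)}. coeff p i *s ((*v) M ^^ i) v = 0"
    by (auto simp: coeff_eq_0)
qed (use assms in auto)

lemma poly_apply_add: "poly_apply (p + q) M v = poly_apply p M v + poly_apply q M v"
proof -
  let ?N = "Suc (max (degree p) (degree q))"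
  have "degree (p + q) < ?N" using degree_add_le_max[of p q] by simp
  then show ?thesis
    by (simp add: poly_apply_upto[of _ ?N] vec.scale_left_distrib sum.distrib)
qed

lemma poly_apply_smult: "poly_apply (smult c p) M v = c *s poly_apply p M v"
  by (simp add: poly_apply_upto[of _ "Suc (degree p)"] vec.scale_sum_right poly_apply_def)

lemma poly_apply_pCons0: "poly_apply (pCons 0 q) M v = M *v poly_apply q M v"
proof -
  let ?N = "Suc (Suc (degree q))"
  have "degree (pCons 0 q) < ?N" by (simp add: degree_pCons_le le_imp_less_Suc)
  then have "poly_apply (pCons 0 q) M v = (\<Sum>i<?N. coeff (pCons 0 q) i *s (((*v) M ^^ i) v))"
    by (rule poly_apply_upto)
  also have "\<dots> = (\<Sum>i<Suc (degree q). coeff q i *s (((*v) M ^^ Suc i) v))"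
    by (simp only: sum.lessThan_Suc_shift) simp
  also have "\<dots> = M *v poly_apply q M v"
    by (simp add: poly_apply_def vec.sum vec.scale del: sum.lessThan_Suc)
  finally show ?thesis .
qed

lemma poly_apply_const: "poly_apply [:c:] M v = c *s v"
  by (simp add: poly_apply_def)

lemma poly_apply_sum: "finite S \<Longrightarrow> poly_apply (\<Sum>i\<in>S. f i) M v = (\<Sum>i\<in>S. poly_apply (f i) M v)"
  by (induction S rule: finite_induct) (simp_all add: poly_apply_add poly_apply_def[of 0])

lemma poly_apply_monom: "poly_apply (monom a k) M v = a *s (((*v) M ^^ k) v)"
proof -
  have "degree (monom a k) < Suc k" by (simp add: degree_monom_le le_imp_less_Suc)
  then have "poly_apply (monom a k) M v = (\<Sum>i<Suc k. coeff (monom a k) i *s (((*v) M ^^ i) v))"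
    by (rule poly_apply_upto)
  also have "\<dots> = a *s (((*v) M ^^ k) v)"
    by (simp add: coeff_monom if_distrib[of "\<lambda>r. r *s _"] sum.delta cong: if_cong)
  finally show ?thesis .
qed

lemma poly_apply_invariant:
  assumes "vec.subspace R" "\<forall>w\<in>R. M *v w \<in> R" "v \<in> R"
  shows "poly_apply p M v \<in> R"
proof -
  have "((*v) M ^^ i) v \<in> R" for i
    by (induction i) (use assms in auto)
  then show ?thesis unfolding poly_apply_def
    by (intro vec.subspace_sum[OF assms(1)] vec.subspace_scale[OF assms(1)])
qed

text \<open>The Krylov vectors v, Mv, M^2 v, ... cannot stay independent in a finite-dimensional
  space, so some nonzero polynomial in M annihilates v.\<close>
lemma annihilating_polynomial:
  fixes M :: "'f::field^'n^'n"
  shows "\<exists>p. p \<noteq> 0 \<and> poly_apply p M v = 0"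
proof -
  define f where "f i = ((*v) M ^^ i) v" for i
  have "\<exists>k. f k \<in> vec.span (f ` {..<k})"
  proof (rule ccontr)
    assume "\<not> ?thesis"
    then have new: "\<And>k. f k \<notin> vec.span (f ` {..<k})" by blast
    have "vec.dim (f ` {..<k}) = k" for k
    proof (induction k)
      case (Suc k)
      have "f ` {..<Suc k} = insert (f k) (f ` {..<k})" by (simp add: lessThan_Suc)
      then show ?case using new[of k] Suc by (simp add: vec.dim_insert)
    qed simp
    from this[of "Suc CARD('n)"] dim_subset_UNIV_cart_gen[of "f ` {..<Suc CARD('n)}"]
    show False by simp
  qed
  then obtain k where "f k \<in> vec.span (f ` {..<k})" by blast
  then obtain c where c: "f k = (\<Sum>i<k. c i *s f i)"
    using span_finite_family[where I="{..<k}" and f=f] by blast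
  define p where "p = monom 1 k + smult (-1) (\<Sum>i<k. monom (c i) i)"
  have "coeff p k = 1" by (simp add: p_def coeff_sum)
  moreover have "poly_apply p M v = f k + (-1) *s (\<Sum>i<k. c i *s f i)"
    unfolding p_def poly_apply_add poly_apply_smult poly_apply_sum[OF finite_lessThan]
      poly_apply_monom f_def by simp
  ultimately show ?thesis using c by (intro exI[of _ p]) auto
qed

text \<open>Over an algebraically closed field, factoring off linear factors of an annihilating
  polynomial one at a time produces an eigenvector inside any invariant subspace.\<close>
lemma invariant_subspace_eigenvector:
  fixes M :: "'f::field^'n^'n"
  assumes ac: "alg_closed TYPE('f)" and R: "vec.subspace R" "\<forall>w\<in>R. M *v w \<in> R"
    and v: "v \<in> R" "v \<noteq> 0"
  shows "\<exists>l w. w \<in> R \<and> w \<noteq> 0 \<and> M *v w = l *s w"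
proof -
  have "?thesis" if "degree p = n" "p \<noteq> 0" "poly_apply p M v = 0" for n p
    using that
  proof (induction n arbitrary: p rule: less_induct)
    case (less n p)
    show ?case
    proof (cases "degree p = 0")
      case True
      then obtain a where pa: "p = [:a:]" by (metis degree_eq_zeroE)
      then have "poly_apply p M v \<noteq> 0" using less.prems(2) v(2) by (simp add: poly_apply_const)
      then show ?thesis using less.prems(3) by simp
    next
      case False
      then obtain l where "poly p l = 0" using ac unfolding alg_closed_def by force
      then obtain q where pq: "p = [:-l, 1:] * q" by (metis poly_eq_0_iff_dvd dvdE)
      have q0: "q \<noteq> 0" using less.prems(2) pq by auto
      have "degree p = degree [:-l,1:] + degree q"
        unfolding pq by (rule degree_mult_eq) (use q0 in simp_all)
      then have dq: "degree q < n" using less.prems(1) by simp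
      have "p = smult (-l) q + pCons 0 q" using pq by simp
      then have pe: "poly_apply p M v = (-l) *s poly_apply q M v + M *v poly_apply q M v"
        by (metis poly_apply_add poly_apply_smult poly_apply_pCons0)
      show ?thesis
      proof (cases "poly_apply q M v = 0")
        case True
        then show ?thesis using less.IH[OF dq refl q0] by blast
      next
        case False
        have "M *v poly_apply q M v = l *s poly_apply q M v"
          using pe less.prems(3) by (metis add.commute add_eq_0_iff vec.scale_minus_left)
        then show ?thesis using False poly_apply_invariant[OF R v(1)] by blast
      qed
    qed
  qed
  moreover obtain p where "p \<noteq> 0" "poly_apply p M v = 0"
    using annihilating_polynomial by blast
  ultimately show ?thesis by blast
qed

section \<open>A rank-one element of the generated algebra\<close>

lemma dim_image_lt_of_kernel:
  fixes N :: "'f::field^'n^'n"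
  assumes R: "vec.subspace R" and w: "w \<in> R" "w \<noteq> 0" "N *v w = 0"
  shows "vec.dim ((*v) N ` R) < vec.dim R"
proof -
  have "vec.independent {w}" using w(2) by (simp add: vec.independent_insert)
  then obtain B where B: "{w} \<subseteq> B" "B \<subseteq> R" "vec.independent B" "R \<subseteq> vec.span B"
    using vec.maximal_independent_subset_extend[of "{w}" R] w(1) by blast
  have fB: "finite B" using B(3) vec.finiteI_independent by blast
  have "(*v) N ` B \<subseteq> insert 0 ((*v) N ` (B - {w}))" using w(3) by auto
  then have "vec.span ((*v) N ` B) \<subseteq> vec.span ((*v) N ` (B - {w}))"
    by (metis vec.span_insert_0 vec.span_mono)
  moreover have "(*v) N ` R \<subseteq> vec.span ((*v) N ` B)"
    using B(4) by (auto simp: vec.span_image)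
  ultimately have "vec.dim ((*v) N ` R) \<le> card ((*v) N ` (B - {w}))"
    using fB by (intro vec.dim_le_card) auto
  also have "\<dots> \<le> card (B - {w})" using fB by (intro card_image_le) auto
  also have "\<dots> < card B" using fB B(1) by (metis card_Diff1_less insert_subset)
  finally show ?thesis using vec.basis_card_eq_dim[OF B(2) B(4) B(3)] by simp
qed

text \<open>Rank reduction: if T has rank at least two, pick x, y with Tx, Ty independent and S in
  the algebra with S(Tx) = y.  TS leaves the range of T invariant, so it has an eigenvalue l
  there; then (TS - l)T lies in the algebra, is nonzero at x, and has smaller rank.\<close>
lemma rank_reduction:
  fixes A B T :: "'f::field^'n^'n"
  assumes ac: "alg_closed TYPE('f)" and ir: "irreducible_pair A B"
    and T: "T \<in> generated_algebra A B" and big: "vec.dim (range ((*v) T)) > 1"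
  shows "\<exists>T'\<in>generated_algebra A B. T' \<noteq> 0 \<and> vec.dim (range ((*v) T')) < vec.dim (range ((*v) T))"
proof -
  let ?R = "range ((*v) T)"
  have Rsub: "vec.subspace ?R" using vec.subspace_image[OF vec.subspace_UNIV] .
  obtain x where x: "T *v x \<noteq> 0"
    using big nonzero_matrix_witness[of T] by fastforce
  have "\<exists>y. T *v y \<notin> vec.span {T *v x}"
  proof (rule ccontr)
    assume "\<not> ?thesis"
    then have "vec.dim ?R \<le> card {T *v x}" by (intro vec.dim_le_card) auto
    then show False using big by simp
  qed
  then obtain y where y: "T *v y \<notin> vec.span {T *v x}" by blast
  obtain S where S: "S \<in> generated_algebra A B" "S *v (T *v x) = y"
    using cyclic_vector[OF ir x] by blast
  let ?M = "T ** S"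
  have "\<forall>w\<in>?R. ?M *v w \<in> ?R" by (auto simp: matrix_vector_mul_assoc[symmetric])
  then obtain l w where lw: "w \<in> ?R" "w \<noteq> 0" "?M *v w = l *s w"
    using invariant_subspace_eigenvector[OF ac Rsub _ _ x] by blast
  let ?N = "?M - mat l"
  let ?T' = "?N ** T"
  have "?T' \<in> generated_algebra A B"
    unfolding minus_mat_as_mscale by (intro gen_mult gen_add gen_scale gen_one S T)
  moreover have "?T' \<noteq> 0"
  proof
    assume "?T' = 0"
    moreover have "?T' *v x = T *v y - l *s (T *v x)"
      using S by (simp add: matrix_vector_mul_assoc[symmetric] matrix_vector_mult_diff_rdistrib mat_mv)
    ultimately have "T *v y = l *s (T *v x)" by simp
    then show False using y by (metis vec.span_base vec.span_scale singletonI)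
  qed
  moreover have "vec.dim (range ((*v) ?T')) < vec.dim ?R"
  proof -
    have "?N *v w = 0" using lw(3) by (simp add: matrix_vector_mult_diff_rdistrib mat_mv)
    moreover have "range ((*v) ?T') = (*v) ?N ` ?R"
      by (auto simp: matrix_vector_mul_assoc[symmetric] image_iff)
    ultimately show ?thesis using dim_image_lt_of_kernel[OF Rsub lw(1,2)] by simp
  qed
  ultimately show ?thesis by blast
qed

text \<open>A nonzero element of minimal rank in the algebra has rank one.\<close>
lemma rank_one_in_generated_algebra:
  fixes A B :: "'f::field^'n^'n"
  assumes ac: "alg_closed TYPE('f)" and ir: "irreducible_pair A B"
  shows "\<exists>T\<in>generated_algebra A B. T \<noteq> 0 \<and> vec.dim (range ((*v) T)) \<le> 1"
proof -
  define P where "P k \<longleftrightarrow> (\<exists>T\<in>generated_algebra A B. T \<noteq> 0 \<and> vec.dim (range ((*v) T)) = k)" for k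
  have "P (vec.dim (range ((*v) (mat 1 :: 'f^'n^'n))))"
    unfolding P_def using gen_one mat_one_nonzero by blast
  then have "P (LEAST k. P k)" by (rule LeastI)
  then obtain T where T: "T \<in> generated_algebra A B" "T \<noteq> 0"
    and kT: "vec.dim (range ((*v) T)) = (LEAST k. P k)"
    unfolding P_def by blast
  show ?thesis
  proof (rule ccontr)
    assume "\<not> ?thesis"
    then have "vec.dim (range ((*v) T)) > 1" using T by force
    then obtain T' where "T' \<in> generated_algebra A B" "T' \<noteq> 0"
      "vec.dim (range ((*v) T')) < (LEAST k. P k)"
      using rank_reduction[OF ac ir T(1)] kT by auto
    then show False using not_less_Least[of "vec.dim (range ((*v) T'))" P] unfolding P_def by blast
  qed
qed

section \<open>Burnside's theorem\<close>

abbreviation dotp :: "'f::field^'n \<Rightarrow> 'f^'n \<Rightarrow> 'f" where "dotp \<equiv> scalar_product"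

lemma dotp_add: "dotp r (x + y) = dotp r x + dotp r (y::'f::field^'n)"
  by (simp add: scalar_product_def distrib_left sum.distrib)

lemma dotp_scale: "dotp r (c *s x) = c * dotp r (x::'f::field^'n)"
  by (simp add: scalar_product_def sum_distrib_left mult.left_commute)

lemma dotp_zero: "dotp r (0::'f::field^'n) = 0"
  by (simp add: scalar_product_def)

lemma dotp_axis: "dotp (axis k 1) (v::'f::field^'n) = v $ k"
  by (simp add: scalar_product_def axis_def if_distrib[of "\<lambda>x. x * _"] cong: if_cong)

lemma dotp_vector_matrix: "dotp (x v* Q) z = dotp x (Q *v (z::'f::field^'n))"
proof -
  have "dotp (x v* Q) z = (\<Sum>j\<in>UNIV. \<Sum>i\<in>UNIV. x$i * Q$i$j * z$j)"
    by (simp add: scalar_product_def vector_matrix_mult_def sum_distrib_right)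
  also have "\<dots> = (\<Sum>i\<in>UNIV. \<Sum>j\<in>UNIV. x$i * Q$i$j * z$j)"
    by (rule sum.swap)
  also have "\<dots> = dotp x (Q *v z)"
    by (simp add: scalar_product_def matrix_vector_mult_def sum_distrib_left mult.assoc)
  finally show ?thesis .
qed

lemma dotp_zero_span:
  assumes "w \<in> vec.span B" "\<forall>b\<in>B. dotp b z = 0"
  shows "dotp w (z::'f::field^'n) = 0"
  using assms(1)
proof (induction rule: vec.span_induct_alt)
  case base then show ?case by (simp add: scalar_product_def)
next
  case (step c x y)
  have "dotp (c *s x + y) z = c * dotp x z + dotp y z"
    by (simp add: scalar_product_def distrib_right sum.distrib sum_distrib_left mult.assoc)
  then show ?case using step assms(2) by simp
qed

text \<open>A subspace whose annihilator is trivial is the whole space: stacking a basis of W as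
  the rows of a matrix gives a matrix with trivial kernel, whose rows then span everything.\<close>
lemma subspace_trivial_annihilator:
  fixes W :: "('f::field^'n) set"
  assumes W: "vec.subspace W" and an: "\<And>z. (\<forall>w\<in>W. dotp w z = 0) \<Longrightarrow> z = 0"
  shows "W = UNIV"
proof -
  obtain B where B: "B \<subseteq> W" "vec.independent B" "W \<subseteq> vec.span B" "card B = vec.dim W"
    using vec.basis_exists by blast
  obtain xs where xs: "set xs = B" "distinct xs"
    using finite_distinct_list[OF vec.finiteI_independent[OF B(2)]] by blast
  have "length xs = vec.dim W" using B(4) xs distinct_card by metis
  then have lxs: "length xs \<le> CARD('n)" using dim_subset_UNIV_cart_gen[of W] by simp
  obtain h :: "'n \<Rightarrow> nat" where h: "bij_betw h UNIV {0..<CARD('n)}"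
    using ex_bij_betw_finite_nat[of "UNIV :: 'n set"] by auto
  define R :: "'f^'n^'n" where "R = (\<chi> i. if h i < length xs then xs ! h i else 0)"
  have "row i R = (if h i < length xs then xs ! h i else 0)" for i
    by (simp add: row_def R_def vec_eq_iff)
  then have "rows R \<subseteq> W"
    using B(1) xs(1) vec.subspace_0[OF W] by (auto simp: rows_def)
  moreover have "\<forall>z. R *v z = 0 \<longrightarrow> z = 0"
  proof (intro allI impI)
    fix z assume Rz: "R *v z = 0"
    have "dotp b z = 0" if "b \<in> B" for b
    proof -
      have "b \<in> set xs" using that xs(1) by simp
      then obtain k where k: "k < length xs" "b = xs ! k" unfolding in_set_conv_nth by blast
      then have "k \<in> {0..<CARD('n)}" using lxs by simp
      then have "k \<in> h ` UNIV" using h by (simp add: bij_betw_def)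
      then obtain i where "h i = k" by blast
      then have "R $ i = b" using k by (simp add: R_def)
      moreover have "(R *v z) $ i = dotp (R $ i) z"
        by (simp add: matrix_vector_mult_def scalar_product_def)
      ultimately show ?thesis using Rz by simp
    qed
    then have "\<forall>w\<in>W. dotp w z = 0" using B(3) dotp_zero_span by blast
    then show "z = 0" by (rule an)
  qed
  then have "vec.span (rows R) = UNIV"
    using matrix_left_invertible_ker matrix_left_invertible_span_rows_gen by blast
  ultimately show ?thesis using vec.span_minimal[of "rows R" W] W by auto
qed

text \<open>Dual cyclicity: every nonzero functional r generates all functionals under the
  generated algebra (acting from the right), since the common kernel of these functionals is
  an invariant subspace missing some vector.\<close>
lemma cyclic_functional:
  fixes A B :: "'f::field^'n^'n"
  assumes ir: "irreducible_pair A B" and r: "dotp r v0 \<noteq> 0"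
  shows "\<exists>Q\<in>generated_algebra A B. r v* Q = s"
proof -
  let ?W = "{r v* Q | Q. Q \<in> generated_algebra A B}"
  have Wsub: "vec.subspace ?W"
    unfolding vec.subspace_def
  proof (intro conjI ballI allI)
    show "0 \<in> ?W" using gen_zero[of A B] by force
    fix x y assume "x \<in> ?W" "y \<in> ?W"
    then obtain P Q where "P \<in> generated_algebra A B" "Q \<in> generated_algebra A B"
      "x = r v* P" "y = r v* Q" by blast
    then show "x + y \<in> ?W" using gen_add[of P A B Q]
      by (metis (mono_tags, lifting) mem_Collect_eq vector_matrix_mult_add_rdistrib)
  next
    fix c x assume "x \<in> ?W"
    then obtain Q where "Q \<in> generated_algebra A B" "x = r v* Q" by blast
    moreover have "c *s (r v* Q) = r v* mscale c Q"
      by (simp add: vec_eq_iff vector_matrix_mult_def mscale_def sum_distrib_left mult.left_commute)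
    ultimately show "c *s x \<in> ?W" using gen_scale[of Q A B c] by auto
  qed
  have "?W = UNIV"
  proof (rule subspace_trivial_annihilator[OF Wsub])
    fix z assume zW: "\<forall>w\<in>?W. dotp w z = 0"
    let ?Z = "{z. \<forall>Q\<in>generated_algebra A B. dotp r (Q *v z) = 0}"
    have Zsub: "vec.subspace ?Z"
      unfolding vec.subspace_def by (auto simp: vec.add vec.scale dotp_add dotp_scale dotp_zero)
    have "M *v w \<in> ?Z" if "M \<in> generated_algebra A B" "w \<in> ?Z" for M w
      using that by (auto simp: matrix_vector_mul_assoc intro: gen_mult)
    then have "\<forall>w\<in>?Z. A *v w \<in> ?Z" "\<forall>w\<in>?Z. B *v w \<in> ?Z"
      using gen_left gen_right by blast+
    moreover have "v0 \<notin> ?Z" using gen_one[of A B] r by force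
    ultimately have "?Z = {0}" using irreducible_pairD[OF ir Zsub] by blast
    moreover have "z \<in> ?Z" using zW by (auto simp: dotp_vector_matrix[symmetric])
    ultimately show "z = 0" by blast
  qed
  then have "s \<in> ?W" by simp
  then show ?thesis by blast
qed

lemma rank_one_outer_product:
  fixes T :: "'f::field^'n^'n"
  assumes T: "T \<noteq> 0" "vec.dim (range ((*v) T)) \<le> 1"
  shows "\<exists>u r. u \<noteq> 0 \<and> (\<forall>v. T *v v = dotp r v *s u)"
proof -
  obtain v0 where u0: "T *v v0 \<noteq> 0" using nonzero_matrix_witness[OF T(1)] by blast
  define u where "u = T *v v0"
  have rng: "T *v v \<in> vec.span {u}" for v
  proof (rule ccontr)
    assume nv: "T *v v \<notin> vec.span {u}"
    then have "T *v v \<noteq> u" using vec.span_base by blast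
    moreover have "vec.independent {T *v v, u}"
      using nv u0 by (simp add: vec.independent_insert u_def)
    moreover have "{T *v v, u} \<subseteq> range ((*v) T)" using u_def by auto
    ultimately show False
      using vec.independent_card_le_dim[of "{T *v v, u}" "range ((*v) T)"] T(2) by simp
  qed
  obtain i0 where i0: "u $ i0 \<noteq> 0" using u0 unfolding u_def by (metis vec_eq_iff zero_index)
  define r :: "'f^'n" where "r = (\<chi> j. T $ i0 $ j / u $ i0)"
  have "T *v v = dotp r v *s u" for v
  proof -
    obtain c where c: "T *v v = c *s u" using rng[of v] by (auto simp: vec.span_singleton)
    have "dotp r v = (T *v v) $ i0 / u $ i0"
      by (simp add: r_def scalar_product_def matrix_vector_mult_def sum_divide_distrib mult.commute)
    then show ?thesis using c i0 by simp
  qed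
  then show ?thesis using u0 u_def by blast
qed

definition matrix_unit :: "'n \<Rightarrow> 'n \<Rightarrow> 'f::field^'n^'n" where
  "matrix_unit j k = (\<chi> a b. if a = j \<and> b = k then 1 else 0)"

lemma matrix_unit_mv: "matrix_unit j k *v v = v $ k *s axis j (1::'f::field)"
  by (simp add: vec_eq_iff matrix_unit_def matrix_vector_mult_def axis_def
      if_distrib[of "\<lambda>x. x * _"] cong: if_cong)

lemma matrix_unit_decomposition:
  "(X::'f::field^'n^'n) = (\<Sum>j\<in>UNIV. \<Sum>k\<in>UNIV. mscale (X$j$k) (matrix_unit j k))"
proof -
  have "(\<Sum>a\<in>UNIV. \<Sum>b\<in>UNIV. if j = a \<and> k = b then X$a$b else 0) = X$j$k" for j k
  proof -
    have "(\<Sum>b\<in>UNIV. if j = a \<and> k = b then X$a$b else 0) = (if j = a then X$a$k else 0)" for a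
      by (cases "j = a") (simp_all add: sum.delta')
    then show ?thesis by simp
  qed
  then show ?thesis
    by (simp add: vec_eq_iff sum_component mscale_def matrix_unit_def
        if_distrib[of "\<lambda>x. _ * x"] cong: if_cong)
qed

text \<open>With T = u r^T of rank one in the algebra, choose P, Q
  in the algebra with Pu = e_j and r^T Q = e_k^T; then PTQ is the matrix unit E_jk.\<close>
theorem burnside:
  fixes A B :: "'f::field^'n^'n"
  assumes ac: "alg_closed TYPE('f)" and ir: "irreducible_pair A B"
  shows "generated_algebra A B = UNIV"
proof -
  obtain T where T: "T \<in> generated_algebra A B" "T \<noteq> 0" "vec.dim (range ((*v) T)) \<le> 1"
    using rank_one_in_generated_algebra[OF ac ir] by blast
  then obtain u r where u: "u \<noteq> 0" and Tur: "\<And>v. T *v v = dotp r v *s u"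
    using rank_one_outer_product by blast
  obtain v0 where "T *v v0 \<noteq> 0" using nonzero_matrix_witness[OF T(2)] by blast
  then have r: "dotp r v0 \<noteq> 0" using Tur by auto
  have unit: "matrix_unit j k \<in> generated_algebra A B" for j k
  proof -
    obtain P where P: "P \<in> generated_algebra A B" "P *v u = axis j 1"
      using cyclic_vector[OF ir u] by blast
    obtain Q where Q: "Q \<in> generated_algebra A B" "r v* Q = axis k 1"
      using cyclic_functional[OF ir r] by blast
    have "(P ** T ** Q) *v v = matrix_unit j k *v v" for v
    proof -
      have "(P ** T ** Q) *v v = dotp r (Q *v v) *s (P *v u)"
        by (simp add: matrix_vector_mul_assoc[symmetric] Tur vec.scale)
      also have "dotp r (Q *v v) = v $ k"
        using Q(2) dotp_axis by (simp add: dotp_vector_matrix[symmetric])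
      finally show ?thesis using P(2) by (simp add: matrix_unit_mv)
    qed
    then have "P ** T ** Q = matrix_unit j k" by (simp add: matrix_eq)
    then show ?thesis using gen_mult[OF gen_mult[OF P(1) T(1)] Q(1)] by simp
  qed
  have "X \<in> generated_algebra A B" for X
    by (subst matrix_unit_decomposition) (intro gen_sum gen_scale unit, auto)
  then show ?thesis by blast
qed

section \<open>Anti-homomorphisms of the matrix algebra\<close>

definition anti_homomorphism :: "('f::field^'n^'n \<Rightarrow> 'f^'n^'n) \<Rightarrow> bool" where
  "anti_homomorphism f \<longleftrightarrow>
     (\<forall>X Y. f (X + Y) = f X + f Y) \<and> (\<forall>c X. f (mscale c X) = mscale c (f X)) \<and>
     (\<forall>X Y. f (X ** Y) = f Y ** f X)"

lemma antiautomorphism_iff: "antiautomorphism f \<longleftrightarrow> anti_homomorphism f \<and> bij f"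
  unfolding antiautomorphism_def anti_homomorphism_def by blast

text \<open>A bijective anti-homomorphism is unital: f(1) is a right identity on the whole range.\<close>
lemma antiautomorphism_one:
  assumes "antiautomorphism g"
  shows "g (mat 1) = mat 1"
proof -
  obtain X where X: "g X = mat 1" using assms unfolding antiautomorphism_def by (metis bij_pointE)
  have "g (mat 1 ** X) = g X ** g (mat 1)" using assms unfolding antiautomorphism_def by blast
  then show ?thesis using X by (simp add: matrix_mul_lid)
qed

lemma anti_homomorphisms_agree:
  assumes "anti_homomorphism f" "anti_homomorphism g"
    and "f A = g A" "f B = g B" "f (mat 1) = g (mat 1)"
    and "generated_algebra A B = UNIV"
  shows "f = g"
proof -
  have "generated_algebra A B \<subseteq> {X. f X = g X}"
    by (rule generated_algebra_least) (use assms(1-5) in \<open>auto simp: anti_homomorphism_def\<close>)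
  then show ?thesis using assms(6) by auto
qed

text \<open>A unital anti-homomorphism fixing the generators is an involution: its square is a
  unital homomorphism fixing the generators.\<close>
lemma anti_homomorphism_involutive:
  assumes "anti_homomorphism f" "f A = A" "f B = B" "f (mat 1) = mat 1"
    and "generated_algebra A B = UNIV"
  shows "f (f X) = X"
proof -
  have "generated_algebra A B \<subseteq> {X. f (f X) = X}"
    by (rule generated_algebra_least) (use assms(1-4) in \<open>auto simp: anti_homomorphism_def\<close>)
  then show ?thesis using assms(5) by auto
qed

section \<open>The adjoint with respect to an invariant bilinear form\<close>

definition right_nondegenerate :: "('f::field^'n \<Rightarrow> 'f^'n \<Rightarrow> 'f) \<Rightarrow> bool" where
  "right_nondegenerate b \<longleftrightarrow> (\<forall>v. (\<forall>u. b u v = 0) \<longrightarrow> v = 0)"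

lemma bilinear_formD:
  assumes "bilinear_form b"
  shows "b (x + y) z = b x z + b y z" "b (c *s x) z = c * b x z"
    "b x (y + z) = b x y + b x z" "b x (c *s z) = c * b x z"
  using assms unfolding bilinear_form_def by blast+

text \<open>The right radical of a nonzero form for which A and B are self-adjoint is a proper
  invariant subspace, hence zero when the pair is irreducible.\<close>
lemma invariant_form_nondegenerate:
  assumes ir: "irreducible_pair A B" and b: "bilinear_form b" and nz: "\<exists>u v. b u v \<noteq> 0"
    and symA: "\<And>u v. b (A *v u) v = b u (A *v v)"
    and symB: "\<And>u v. b (B *v u) v = b u (B *v v)"
  shows "right_nondegenerate b"
proof -
  let ?R = "{v. \<forall>u. b u v = 0}"
  have "b u 0 = 0" for u using bilinear_formD(4)[OF b, of u 0 0] by simp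
  then have sub: "vec.subspace ?R" unfolding vec.subspace_def by (auto simp: bilinear_formD[OF b])
  have "\<forall>w\<in>?R. A *v w \<in> ?R" "\<forall>w\<in>?R. B *v w \<in> ?R" by (auto simp: symA[symmetric] symB[symmetric])
  moreover have "?R \<noteq> UNIV" using nz by auto
  ultimately have "?R = {0}" using irreducible_pairD[OF ir sub] by blast
  then show ?thesis unfolding right_nondegenerate_def by blast
qed

text \<open>For a nondegenerate form, a matrix is determined by its values b u (Y v); so the adjoint
  identity forces the algebraic properties of the adjoint map.\<close>
lemma matrix_eq_by_form:
  assumes b: "bilinear_form b" and nd: "right_nondegenerate b"
    and eq: "\<And>u v. b u (Y *v v) = b u (Z *v v)"
  shows "Y = Z"
proof -
  have "b u (Y *v v - Z *v v) = 0" for u v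
    using eq bilinear_formD(3)[OF b, of u "Y *v v - Z *v v" "Z *v v"] by simp
  then have "Y *v v - Z *v v = 0" for v using nd unfolding right_nondegenerate_def by blast
  then show ?thesis by (simp add: matrix_eq)
qed

lemma adjoint_anti_homomorphism:
  assumes b: "bilinear_form b" and nd: "right_nondegenerate b"
    and adj: "\<And>X u v. b (X *v u) v = b u (dag X *v v)"
  shows "anti_homomorphism dag" "dag (mat 1) = mat 1"
proof -
  note ext = matrix_eq_by_form[OF b nd] and adj' = adj[symmetric]
  have "dag (X + Y) = dag X + dag Y" for X Y
    by (rule ext) (simp add: adj' matrix_vector_mult_add_rdistrib bilinear_formD[OF b])
  moreover have "dag (mscale c X) = mscale c (dag X)" for c X
    by (rule ext) (simp add: adj' mscale_mv bilinear_formD[OF b])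
  moreover have "dag (X ** Y) = dag Y ** dag X" for X Y
    by (rule ext) (simp add: adj' matrix_vector_mul_assoc[symmetric])
  ultimately show "anti_homomorphism dag" unfolding anti_homomorphism_def by blast
  show "dag (mat 1) = mat 1" by (rule ext) (simp add: adj')
qed

lemma adjoint_fixes_self_adjoint:
  assumes b: "bilinear_form b" and nd: "right_nondegenerate b"
    and adj: "\<And>X u v. b (X *v u) v = b u (dag X *v v)"
    and sym: "\<And>u v. b (A *v u) v = b u (A *v v)"
  shows "dag A = A"
  by (rule matrix_eq_by_form[OF b nd]) (simp add: adj[symmetric] sym)

theorem theorem10p2:
  fixes A As :: "'f::field_char_0^'n^'n"
    and b :: "'f^'n \<Rightarrow> 'f^'n \<Rightarrow> 'f"
    and dag :: "'f^'n^'n \<Rightarrow> 'f^'n^'n"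
  assumes "alg_closed TYPE('f)"
    and "TD_pair A As"
    and "krawtchouk_type A As"
    and "bilinear_form b"
    and "\<exists>u v. b u v \<noteq> 0"
    and "\<forall>u v. b (A *v u) v = b u (A *v v)"
    and "\<forall>u v. b (As *v u) v = b u (As *v v)"
    and "\<forall>X u v. b (X *v u) v = b u (dag X *v v)"
  shows "antiautomorphism dag \<and> dag A = A \<and> dag As = As \<and>
         (\<forall>g. antiautomorphism g \<and> g A = A \<and> g As = As \<longrightarrow> g = dag) \<and>
         (\<forall>X. dag (dag X) = X)"
proof -
  have ir: "irreducible_pair A As" using assms(2) by (rule TD_pair_irreducible)
  have full: "generated_algebra A As = UNIV" using burnside[OF assms(1) ir] .
  note symA = assms(6)[rule_format] and symAs = assms(7)[rule_format]
    and adj = assms(8)[rule_format]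
  have nd: "right_nondegenerate b"
    using invariant_form_nondegenerate[OF ir assms(4,5) symA symAs] .
  have hom: "anti_homomorphism dag" and one: "dag (mat 1) = mat 1"
    using adjoint_anti_homomorphism[OF assms(4) nd adj] by blast+
  have fixA: "dag A = A" and fixAs: "dag As = As"
    using adjoint_fixes_self_adjoint[OF assms(4) nd adj] symA symAs by blast+
  have invol: "\<forall>X. dag (dag X) = X"
    using anti_homomorphism_involutive[OF hom fixA fixAs one full] by blast
  then have "bij dag" by (metis bijI injI surjI)
  then have anti: "antiautomorphism dag" using hom by (simp add: antiautomorphism_iff)
  have "g = dag" if g: "antiautomorphism g" "g A = A" "g As = As" for g
  proof (rule anti_homomorphisms_agree[OF _ hom _ _ _ full])
    show "anti_homomorphism g" using g(1) by (simp add: antiautomorphism_iff)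
    show "g (mat 1) = dag (mat 1)" using antiautomorphism_one[OF g(1)] one by simp
  qed (use g fixA fixAs in simp_all)
  then show ?thesis using anti fixA fixAs invol by blast
qed

end
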